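(* Let $q\ge1$ be an integer and let $X$ be a random variable such that $qX$ is integer-valued almost surely, with $\mathbb E|X|<\infty$. Then \[ \mathbb E\lfloor X\rfloor=\mathbb E X-\frac12+\frac1{2q}+\sum_{j=1}^{q-1}\frac{1}{q(1-e^{-2\pi\mathrm i j/q})}\varphi_X(2\pi j). \] If $q$ is even, then \[ \mathbb E\langle X\rangle=\mathbb E X+\frac1{2q}+\sum_{j=1}^{q-1}\frac{(-1)^j}{q(1-e^{-2\pi\mathrm i j/q})}\varphi_X(2\pi j). \] If $q$ is odd, then \[ \mathbb E\langle X\rangle=\mathbb E X+\sum_{j=1}^{q-1}\frac{(-1)^j}{q(e^{\pi\mathrm i j/q}-e^{-\pi\mathrm i j/q})}\varphi_X(2\pi j). \]
   Context: For a random variable $Y$, $\varphi_Y(t):=\mathbb E\, e^{\mathrm i tY}$ is its characteristic function. $\lfloor x\rfloor$ is $x$ rounded down to an integer, and $\langle x\rangle:=\lfloor x+\tfrac12\rfloor$ is $x$ rounded to the nearest integer, with ties broken upward. *)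

theory Defs
  imports "HOL-Probability.Probability"
begin

definition round_nearest :: "real \<Rightarrow> int" where
  "round_nearest x = \<lfloor>x + 1/2\<rfloor>"

end

theory Submission
  imports Defs
begin

text \<open>Write \<open>e(t) = exp (2\<pi>it)\<close>. If \<open>qy = n\<close> is an integer, then \<open>\<lfloor>y\<rfloor> = y - (n mod q)/q\<close>, and the
  residue is a finite Fourier sum: the sum over \<open>0 < j < q\<close> of \<open>e(jn/q)/(1 - e(-j/q))\<close> is \<open>(q - 1)/2 - (n mod q)\<close>.
  For \<open>n = 0\<close> this follows by pairing \<open>j\<close> with \<open>q - j\<close>; increasing \<open>n\<close> by one adds the sum of \<open>e(j(n+1)/q)\<close>
  over \<open>0 < j < q\<close>, which is \<open>-1\<close> unless \<open>q\<close> divides \<open>n + 1\<close>. So on \<open>q\<^sup>-\<^sup>1\<int>\<close> the floor is \<open>y\<close> plus a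
  constant plus a trigonometric polynomial in \<open>y\<close>, and taking expectations turns \<open>e(jX)\<close> into
  \<open>\<phi>\<^sub>X(2\<pi>j)\<close>. Rounding reduces to the floor: \<open>\<langle>y\<rangle> = \<lfloor>y + 1/2\<rfloor>\<close> with \<open>q(y + 1/2) \<in> \<int>\<close> when \<open>q\<close> is even,
  and \<open>\<langle>y\<rangle> = \<lfloor>y + (q - 1)/(2q)\<rfloor>\<close> with \<open>q(y + (q - 1)/(2q)) \<in> \<int>\<close> when \<open>q\<close> is odd.\<close>

definition exp2pi :: "real \<Rightarrow> complex" where
  "exp2pi t = exp (2 * pi * \<i> * complex_of_real t)"

lemma exp2pi_add: "exp2pi (s + t) = exp2pi s * exp2pi t"
  unfolding exp2pi_def by (simp add: distrib_left exp_add)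

lemma exp2pi_of_int [simp]: "exp2pi (of_int k) = 1"
  unfolding exp2pi_def using exp_2pi_1_int[of k] by (simp add: mult_ac)

lemma exp2pi_zero [simp]: "exp2pi 0 = 1"
  unfolding exp2pi_def by simp

lemma exp2pi_minus: "exp2pi (- t) = inverse (exp2pi t)"
  unfolding exp2pi_def by (simp add: exp_minus)

lemma exp2pi_nonzero [simp]: "exp2pi t \<noteq> 0"
  unfolding exp2pi_def by simp

lemma exp2pi_power: "exp2pi t ^ n = exp2pi (of_nat n * t)"
  unfolding exp2pi_def by (simp add: exp_of_nat_mult[symmetric] mult_ac)

lemma exp2pi_eq_1_iff: "exp2pi t = 1 \<longleftrightarrow> t \<in> \<int>"
proof -
  have "exp2pi t = 1 \<longleftrightarrow> (\<exists>n::int. t = of_int n)"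
    unfolding exp2pi_def exp_eq_1 by auto
  then show ?thesis by (auto elim: Ints_cases)
qed

lemma exp2pi_half_nat: "exp2pi (real j / 2) = (-1) ^ j"
proof -
  have "exp2pi (1/2) = -1" unfolding exp2pi_def by (simp add: mult_ac)
  then show ?thesis using exp2pi_power[of "1/2" j] by simp
qed

lemma iexp_2pi_mult_eq_exp2pi: "iexp (2 * pi * s * t) = exp2pi (s * t)"
  unfolding exp2pi_def by (simp add: mult_ac)

lemma sum_exp2pi_roots_of_unity:
  fixes n :: int
  assumes "q \<ge> 1" and "\<not> int q dvd n"
  shows "(\<Sum>j=1..q-1. exp2pi (real j * of_int n / real q)) = -1"
proof -
  define w where "w = exp2pi (of_int n / real q)"
  have "w \<noteq> 1"
  proof
    assume "w = 1"
    then obtain k :: int where "of_int n / real q = of_int k"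
      unfolding w_def exp2pi_eq_1_iff by (auto elim: Ints_cases)
    then have "of_int n = (of_int (int q * k) :: real)" using assms(1) by (simp add: field_simps)
    then have "n = int q * k" by (simp only: of_int_eq_iff)
    with assms(2) show False by simp
  qed
  moreover have "w ^ q = 1" unfolding w_def exp2pi_power using assms(1) by simp
  ultimately have "(\<Sum>j<q. w ^ j) = 0" by (simp add: sum_gp_strict)
  moreover have "{..<q} = insert 0 {1..q-1}" using assms(1) by auto
  ultimately have "1 + (\<Sum>j=1..q-1. w ^ j) = 0" by simp
  moreover have "w ^ j = exp2pi (real j * of_int n / real q)" for j
    unfolding w_def exp2pi_power by simp
  ultimately show ?thesis by (simp add: add_eq_0_iff)
qed

lemma inverse_one_minus_inverse_add:
  fixes a :: "'a :: field"
  assumes "a \<noteq> 0" "a \<noteq> 1"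
  shows "1 / (1 - 1 / a) + 1 / (1 - a) = 1"
proof -
  have "1 / (1 - 1 / a) = a / (a - 1)" "1 / (1 - a) = - 1 / (a - 1)"
    using assms by (simp_all add: field_simps)
  then show ?thesis using assms by (simp add: diff_divide_distrib[symmetric])
qed

lemma diff_one_div_one_minus_inverse:
  fixes b :: "'a :: field"
  assumes "b \<noteq> 0" "b \<noteq> 1"
  shows "(b - 1) / (1 - 1 / b) = b"
  using assms by (simp add: field_simps)

lemma of_int_eq_mult_div_add_mod:
  fixes n d :: int
  shows "(of_int n :: 'a :: comm_ring_1) = of_int d * of_int (n div d) + of_int (n mod d)"
  by (metis of_int_add of_int_mult mult_div_mod_eq)

lemma exp2pi_frac_neq_1:
  assumes "0 < j" "j < q"
  shows "exp2pi (real j / real q) \<noteq> 1"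
proof
  assume "exp2pi (real j / real q) = 1"
  then obtain k :: int where "real j / real q = of_int k"
    unfolding exp2pi_eq_1_iff by (auto elim: Ints_cases)
  moreover have "0 < real j / real q" "real j / real q < 1" using assms by auto
  ultimately show False by simp
qed

lemma sum_inverse_one_minus_exp2pi:
  assumes "q \<ge> 1"
  shows "(\<Sum>j=1..q-1. 1 / (1 - exp2pi (- (real j / real q)))) = (real q - 1) / 2"
proof -
  define f where "f j = 1 / (1 - exp2pi (- (real j / real q)))" for j
  have reflect: "f j + f (q - j) = 1" if "j \<in> {1..q-1}" for j
  proof -
    have jq: "0 < j" "j < q" using that by auto
    then have qj: "- (real (q - j) / real q) = real j / real q + of_int (-1)"
      by (simp add: of_nat_diff diff_divide_distrib)
    define a where "a = exp2pi (real j / real q)"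
    have a: "a \<noteq> 0" "a \<noteq> 1" unfolding a_def using exp2pi_frac_neq_1[OF jq] by auto
    have reflected: "exp2pi (- (real (q - j) / real q)) = a"
      unfolding qj exp2pi_add exp2pi_of_int a_def by simp
    show ?thesis
      unfolding f_def reflected exp2pi_minus[of "real j / real q"] a_def[symmetric] inverse_eq_divide
      using a by (rule inverse_one_minus_inverse_add)
  qed
  have "(\<Sum>j=1..q-1. f j) = (\<Sum>j=1..q-1. f (q - j))"
    by (rule sum.reindex_bij_witness[of _ "\<lambda>j. q - j" "\<lambda>j. q - j"]) auto
  then have "2 * (\<Sum>j=1..q-1. f j) = (\<Sum>j=1..q-1. f j + f (q - j))"
    by (simp add: sum.distrib)
  also have "\<dots> = of_nat (q - 1)" using reflect by simp
  finally show ?thesis using assms unfolding f_def by (simp add: of_nat_diff field_simps)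
qed

lemma sum_exp2pi_div_one_minus_exp2pi:
  fixes n :: int
  assumes "q \<ge> 1"
  shows "(\<Sum>j=1..q-1. exp2pi (real j * of_int n / real q) / (1 - exp2pi (- (real j / real q))))
    = (real q - 1) / 2 - of_int (n mod int q)"
proof -
  define S where "S r = (\<Sum>j=1..q-1. exp2pi (real j * of_int r / real q) / (1 - exp2pi (- (real j / real q))))"
    for r :: int
  have S_succ: "S (r + 1) = S r - 1" if "\<not> int q dvd r + 1" for r
  proof -
    have "S (r + 1) - S r = (\<Sum>j=1..q-1. exp2pi (real j * of_int (r + 1) / real q))"
      unfolding S_def sum_subtractf[symmetric]
    proof (rule sum.cong)
      fix j assume j: "j \<in> {1..q-1}"
      define b where "b = exp2pi (real j / real q)"
      define E where "E = exp2pi (real j * of_int r / real q)"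
      have "b \<noteq> 1" unfolding b_def using j by (intro exp2pi_frac_neq_1) auto
      have next_eq: "exp2pi (real j * of_int (r + 1) / real q) = E * b"
        unfolding b_def E_def exp2pi_add[symmetric] by (simp add: algebra_simps add_divide_distrib)
      have "E * b / (1 - 1 / b) - E / (1 - 1 / b) = E * ((b - 1) / (1 - 1 / b))"
        by (simp add: diff_divide_distrib[symmetric] algebra_simps)
      also have "\<dots> = E * b"
        using \<open>b \<noteq> 1\<close> by (simp add: b_def diff_one_div_one_minus_inverse)
      finally show "exp2pi (real j * of_int (r + 1) / real q) / (1 - exp2pi (- (real j / real q)))
          - exp2pi (real j * of_int r / real q) / (1 - exp2pi (- (real j / real q)))
        = exp2pi (real j * of_int (r + 1) / real q)"
        unfolding next_eq exp2pi_minus b_def[symmetric] E_def[symmetric] inverse_eq_divide .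
    qed simp
    also have "\<dots> = -1" using assms that by (rule sum_exp2pi_roots_of_unity)
    finally show ?thesis by (simp add: algebra_simps)
  qed
  have S_nat: "S (int r) = (real q - 1) / 2 - real r" if "r < q" for r
    using that
  proof (induction r)
    case 0
    then show ?case using sum_inverse_one_minus_exp2pi[OF assms] by (simp add: S_def)
  next
    case (Suc r)
    then have "\<not> int q dvd int r + 1" by (auto dest: zdvd_imp_le)
    then have "S (int (Suc r)) = S (int r) - 1" using S_succ[of "int r"] by (simp add: add.commute)
    also have "\<dots> = (real q - 1) / 2 - real (Suc r)" using Suc by simp
    finally show ?case .
  qed
  have "S n = S (n mod int q)"
    unfolding S_def
  proof (rule sum.cong)
    fix j
    have "real j * of_int n / real q = real j * of_int (n mod int q) / real q + of_int (int j * (n div int q))"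
      using assms of_int_eq_mult_div_add_mod[of n "int q", where 'a = real] by (simp add: field_simps)
    then show "exp2pi (real j * of_int n / real q) / (1 - exp2pi (- (real j / real q)))
      = exp2pi (real j * of_int (n mod int q) / real q) / (1 - exp2pi (- (real j / real q)))"
      by (simp only: exp2pi_add exp2pi_of_int mult_1_right)
  qed simp
  also have "\<dots> = (real q - 1) / 2 - of_int (n mod int q)"
    using S_nat[of "nat (n mod int q)"] assms by (simp add: nat_less_iff)
  finally show ?thesis unfolding S_def .
qed

lemma exp_minus_2pi_frac: "exp (- 2 * pi * \<i> * of_nat j / of_nat q) = exp2pi (- (real j / real q))"
  unfolding exp2pi_def by (simp add: mult_ac)

lemma floor_eq_trig_sum:
  assumes "q \<ge> 1" and "real q * y \<in> \<int>"
  shows "complex_of_real (of_int \<lfloor>y\<rfloor>) = complex_of_real y - 1/2 + 1 / (2 * of_nat q)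
    + (\<Sum>j=1..q-1. 1 / (of_nat q * (1 - exp (- 2 * pi * \<i> * of_nat j / of_nat q)))
                    * iexp (2 * pi * real j * y))"
proof -
  obtain n :: int where n: "real q * y = of_int n" using assms(2) by (auto elim: Ints_cases)
  have q0: "real q > 0" using assms(1) by simp
  have y: "y = of_int n / of_int (int q)" using n q0 by (simp add: field_simps)
  have "of_int \<lfloor>y\<rfloor> = y - of_int (n mod int q) / real q"
    unfolding y floor_divide_of_int_eq using q0 of_int_eq_mult_div_add_mod[of n "int q", where 'a = real]
    by (simp add: field_simps)
  also have "\<dots> = y - 1/2 + 1 / (2 * real q) + ((real q - 1) / 2 - of_int (n mod int q)) / real q"
    using q0 by (simp add: field_simps)
  finally have floor_y: "of_int \<lfloor>y\<rfloor> = \<dots>" .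
  have "iexp (2 * pi * real j * y) = exp2pi (real j * of_int n / real q)" for j
    unfolding iexp_2pi_mult_eq_exp2pi y by simp
  then have "(\<Sum>j=1..q-1. 1 / (of_nat q * (1 - exp (- 2 * pi * \<i> * of_nat j / of_nat q)))
                    * iexp (2 * pi * real j * y))
    = (\<Sum>j=1..q-1. exp2pi (real j * of_int n / real q) / (1 - exp2pi (- (real j / real q)))) / of_nat q"
    unfolding exp_minus_2pi_frac sum_divide_distrib by (intro sum.cong) simp_all
  also have "\<dots> = complex_of_real (((real q - 1) / 2 - of_int (n mod int q)) / real q)"
    unfolding sum_exp2pi_div_one_minus_exp2pi[OF assms(1)] by simp
  finally show ?thesis unfolding floor_y by simp
qed

lemma round_nearest_even_trig_sum:
  assumes "q \<ge> 1" and "even q" and "real q * y \<in> \<int>"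
  shows "complex_of_real (of_int (round_nearest y)) = complex_of_real y + 1 / (2 * of_nat q)
    + (\<Sum>j=1..q-1. (-1) ^ j / (of_nat q * (1 - exp (- 2 * pi * \<i> * of_nat j / of_nat q)))
                    * iexp (2 * pi * real j * y))"
proof -
  have "real q * (y + 1/2) = real q * y + of_nat (q div 2)"
    using assms(2) by (simp add: algebra_simps real_of_nat_div)
  then have "real q * (y + 1/2) \<in> \<int>" using assms(3) by simp
  moreover have "iexp (2 * pi * real j * (y + 1/2)) = (-1) ^ j * iexp (2 * pi * real j * y)" for j
  proof -
    have "real j * (y + 1/2) = real j / 2 + real j * y" by (simp add: algebra_simps)
    then show ?thesis unfolding iexp_2pi_mult_eq_exp2pi exp2pi_half_nat[symmetric] exp2pi_add[symmetric]
      by simp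
  qed
  ultimately show ?thesis
    unfolding round_nearest_def using floor_eq_trig_sum[OF assms(1), of "y + 1/2"] by simp
qed

lemma round_nearest_odd_eq_floor:
  assumes "odd q" and "real q * y \<in> \<int>"
  shows "round_nearest y = \<lfloor>y + (real q - 1) / (2 * real q)\<rfloor>"
proof -
  obtain n :: int where n: "real q * y = of_int n" using assms(2) by (auto elim: Ints_cases)
  define k where "k = round_nearest y"
  have q0: "real q > 0" using assms(1) by (cases q) auto
  have k: "of_int k \<le> y + 1/2" "y + 1/2 < of_int k + 1"
    unfolding k_def round_nearest_def by linarith+
  have m: "2 * real q * (y + 1/2) = of_int (2 * n + int q)"
    using n by (simp add: algebra_simps)
  have m': "2 * real q * (y + (real q - 1) / (2 * real q)) = of_int (2 * n + int q - 1)"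
    using n q0 by (simp add: field_simps)
  have "(of_int (2 * int q * k) :: real) \<le> of_int (2 * n + int q)"
    using mult_left_mono[OF k(1), of "2 * real q"] q0 unfolding m by simp
  then have "2 * int q * k \<le> 2 * n + int q" unfolding of_int_le_iff .
  moreover have "2 * int q * k \<noteq> 2 * n + int q" \<comment> \<open>even versus odd\<close>
    using assms(1) by (metis dvd_triv_left even_add even_of_nat mult.assoc)
  ultimately have "2 * int q * k \<le> 2 * n + int q - 1" by linarith
  then have "(of_int (2 * int q * k) :: real) \<le> of_int (2 * n + int q - 1)" unfolding of_int_le_iff .
  then have "2 * real q * of_int k \<le> 2 * real q * (y + (real q - 1) / (2 * real q))"
    unfolding m' by simp
  then have "of_int k \<le> y + (real q - 1) / (2 * real q)" using q0 by simp
  moreover have "(real q - 1) / (2 * real q) < 1/2" using q0 by (simp add: field_simps)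
  then have "y + (real q - 1) / (2 * real q) < of_int k + 1" using k(2) by linarith
  ultimately show ?thesis unfolding k_def[symmetric] by (intro floor_unique[symmetric])
qed

lemma inverse_mult_inverse_one_minus_power2:
  fixes u :: "'a :: field"
  assumes "u \<noteq> 0"
  shows "inverse u * inverse (1 - inverse u ^ 2) = inverse (u - inverse u)"
proof -
  have "u * (1 - inverse u ^ 2) = u - inverse u"
    using assms by (simp add: algebra_simps power2_eq_square)
  then show ?thesis by (metis inverse_mult_distrib)
qed

lemma exp_pi_frac: "exp (pi * \<i> * of_nat j / of_nat q) = exp2pi (real j / (2 * real q))"
  unfolding exp2pi_def by (simp add: mult_ac)

lemma exp_minus_pi_frac: "exp (- pi * \<i> * of_nat j / of_nat q) = exp2pi (- (real j / (2 * real q)))"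
  unfolding exp2pi_def by (simp add: mult_ac)

lemma round_nearest_odd_trig_sum:
  assumes "q \<ge> 1" and "odd q" and "real q * y \<in> \<int>"
  shows "complex_of_real (of_int (round_nearest y)) = complex_of_real y
    + (\<Sum>j=1..q-1. (-1) ^ j / (of_nat q * (exp (pi * \<i> * of_nat j / of_nat q)
                                         - exp (- pi * \<i> * of_nat j / of_nat q)))
                    * iexp (2 * pi * real j * y))"
proof -
  define y' where "y' = y + (real q - 1) / (2 * real q)"
  have q0: "real q > 0" using assms(1) by simp
  have "real (2 * (q div 2) + 1) = real q"
    using odd_two_times_div_two_succ[OF assms(2)] by (rule arg_cong)
  then have "real q = 2 * real (q div 2) + 1" by simp
  then have "real q * y' = real q * y + of_nat (q div 2)"
    using q0 by (simp add: y'_def field_simps)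
  then have "real q * y' \<in> \<int>" using assms(3) by simp
  note floor_y' = floor_eq_trig_sum[OF assms(1) this]
  have "y' - 1/2 + 1 / (2 * real q) = y"
    using q0 by (simp add: y'_def field_simps)
  then have "complex_of_real (y' - 1/2 + 1 / (2 * real q)) = complex_of_real y"
    by (rule arg_cong)
  then have const: "complex_of_real y' - 1/2 + 1 / (2 * of_nat q) = complex_of_real y"
    by simp
  have coeff: "1 / (of_nat q * (1 - exp (- 2 * pi * \<i> * of_nat j / of_nat q))) * iexp (2 * pi * real j * y')
    = (-1) ^ j / (of_nat q * (exp (pi * \<i> * of_nat j / of_nat q) - exp (- pi * \<i> * of_nat j / of_nat q)))
      * iexp (2 * pi * real j * y)" for j
  proof -
    define u where "u = exp2pi (real j / (2 * real q))"
    have u0: "u \<noteq> 0" unfolding u_def by simp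
    have "u ^ 2 = exp2pi (real j / real q)"
      unfolding u_def exp2pi_power by simp
    then have u2: "exp (- 2 * pi * \<i> * of_nat j / of_nat q) = inverse u ^ 2"
      unfolding exp_minus_2pi_frac exp2pi_minus by (simp add: power_inverse)
    have jy': "real j * y' = real j / 2 + - (real j / (2 * real q)) + real j * y"
      using q0 by (simp add: y'_def field_simps)
    have shift: "iexp (2 * pi * real j * y') = (-1) ^ j * inverse u * iexp (2 * pi * real j * y)"
      unfolding iexp_2pi_mult_eq_exp2pi jy' exp2pi_add exp2pi_half_nat exp2pi_minus u_def by simp
    show ?thesis
      unfolding u2 shift exp_pi_frac exp_minus_pi_frac exp2pi_minus u_def[symmetric]
      using inverse_mult_inverse_one_minus_power2[OF u0]
      by (simp add: divide_inverse mult_ac)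
  qed
  show ?thesis
    unfolding round_nearest_odd_eq_floor[OF assms(2,3)] y'_def[symmetric] floor_y' coeff const ..
qed

context prob_space
begin

lemma char_distr_eq_expectation:
  assumes "X \<in> borel_measurable M"
  shows "char (distr M borel X) t = (\<integral>\<omega>. iexp (t * X \<omega>) \<partial>M)"
  unfolding char_def using assms by (subst integral_distr) auto

lemma expectation_trig_expansion:
  fixes X F :: "'a \<Rightarrow> real"
  assumes X: "integrable M X" and F: "F \<in> borel_measurable M" and "finite J"
    and expansion: "AE \<omega> in M. complex_of_real (F \<omega>)
      = complex_of_real (X \<omega>) + c + (\<Sum>j\<in>J. a j * iexp (t j * X \<omega>))"
  shows "complex_of_real (\<integral>\<omega>. F \<omega> \<partial>M)
    = complex_of_real (\<integral>\<omega>. X \<omega> \<partial>M) + c + (\<Sum>j\<in>J. a j * char (distr M borel X) (t j))"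
proof -
  have Xm: "X \<in> borel_measurable M" using X by (rule borel_measurable_integrable)
  have trig: "integrable M (\<lambda>\<omega>. \<Sum>j\<in>J. a j * iexp (t j * X \<omega>))"
    using Xm by (intro Bochner_Integration.integrable_sum Bochner_Integration.integrable_mult_right
      integrable_iexp) auto
  have "complex_of_real (\<integral>\<omega>. F \<omega> \<partial>M) = (\<integral>\<omega>. complex_of_real (F \<omega>) \<partial>M)"
    by simp
  also have "\<dots> = (\<integral>\<omega>. complex_of_real (X \<omega>) + c + (\<Sum>j\<in>J. a j * iexp (t j * X \<omega>)) \<partial>M)"
    using F Xm expansion by (intro integral_cong_AE) auto
  also have "\<dots> = complex_of_real (\<integral>\<omega>. X \<omega> \<partial>M) + c + (\<Sum>j\<in>J. a j * (\<integral>\<omega>. iexp (t j * X \<omega>) \<partial>M))"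
    using X trig Xm by (simp add: integral_add integral_sum integrable_iexp prob_space)
  finally show ?thesis using Xm by (simp add: char_distr_eq_expectation)
qed

lemma expectation_floor_char:
  assumes "q \<ge> 1" and "AE \<omega> in M. real q * X \<omega> \<in> \<int>" and "integrable M X"
  shows "complex_of_real (\<integral>\<omega>. real_of_int \<lfloor>X \<omega>\<rfloor> \<partial>M)
    = complex_of_real (\<integral>\<omega>. X \<omega> \<partial>M) - 1/2 + 1 / (2 * of_nat q)
      + (\<Sum>j=1..q-1. char (distr M borel X) (2 * pi * real j)
                      / (of_nat q * (1 - exp (- 2 * pi * \<i> * of_nat j / of_nat q))))"
proof -
  have [measurable]: "X \<in> borel_measurable M" using assms(3) by (rule borel_measurable_integrable)
  have "AE \<omega> in M. complex_of_real (of_int \<lfloor>X \<omega>\<rfloor>) = complex_of_real (X \<omega>) + (1 / (2 * of_nat q) - 1/2)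
    + (\<Sum>j\<in>{1..q-1}. 1 / (of_nat q * (1 - exp (- 2 * pi * \<i> * of_nat j / of_nat q)))
                      * iexp (2 * pi * real j * X \<omega>))"
    using assms(2) by eventually_elim (simp only: floor_eq_trig_sum[OF assms(1)] add_diff_eq diff_add_eq)
  from expectation_trig_expansion[OF assms(3) _ _ this]
  show ?thesis by (simp add: add_diff_eq diff_add_eq)
qed

lemma expectation_round_nearest_even_char:
  assumes "q \<ge> 1" and "even q" and "AE \<omega> in M. real q * X \<omega> \<in> \<int>" and "integrable M X"
  shows "complex_of_real (\<integral>\<omega>. real_of_int (round_nearest (X \<omega>)) \<partial>M)
    = complex_of_real (\<integral>\<omega>. X \<omega> \<partial>M) + 1 / (2 * of_nat q)
      + (\<Sum>j=1..q-1. (-1) ^ j * char (distr M borel X) (2 * pi * real j)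
                      / (of_nat q * (1 - exp (- 2 * pi * \<i> * of_nat j / of_nat q))))"
proof -
  have [measurable]: "X \<in> borel_measurable M" using assms(4) by (rule borel_measurable_integrable)
  have "AE \<omega> in M. complex_of_real (of_int (round_nearest (X \<omega>))) = complex_of_real (X \<omega>) + 1 / (2 * of_nat q)
    + (\<Sum>j\<in>{1..q-1}. (-1) ^ j / (of_nat q * (1 - exp (- 2 * pi * \<i> * of_nat j / of_nat q)))
                      * iexp (2 * pi * real j * X \<omega>))"
    using assms(3) by eventually_elim (rule round_nearest_even_trig_sum[OF assms(1,2)])
  from expectation_trig_expansion[OF assms(4) _ _ this]
  show ?thesis unfolding round_nearest_def by simp
qed

lemma expectation_round_nearest_odd_char:
  assumes "q \<ge> 1" and "odd q" and "AE \<omega> in M. real q * X \<omega> \<in> \<int>" and "integrable M X"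
  shows "complex_of_real (\<integral>\<omega>. real_of_int (round_nearest (X \<omega>)) \<partial>M)
    = complex_of_real (\<integral>\<omega>. X \<omega> \<partial>M)
      + (\<Sum>j=1..q-1. (-1) ^ j * char (distr M borel X) (2 * pi * real j)
                      / (of_nat q * (exp (pi * \<i> * of_nat j / of_nat q) - exp (- pi * \<i> * of_nat j / of_nat q))))"
proof -
  have [measurable]: "X \<in> borel_measurable M" using assms(4) by (rule borel_measurable_integrable)
  have "AE \<omega> in M. complex_of_real (of_int (round_nearest (X \<omega>))) = complex_of_real (X \<omega>) + 0
    + (\<Sum>j\<in>{1..q-1}. (-1) ^ j / (of_nat q * (exp (pi * \<i> * of_nat j / of_nat q)
                                          - exp (- pi * \<i> * of_nat j / of_nat q)))
                      * iexp (2 * pi * real j * X \<omega>))"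
    using assms(3) by eventually_elim (simp only: round_nearest_odd_trig_sum[OF assms(1,2)] add_0_right)
  from expectation_trig_expansion[OF assms(4) _ _ this]
  show ?thesis unfolding round_nearest_def by simp
qed

end

theorem theorem3:
  fixes M :: "'a measure" and X :: "'a \<Rightarrow> real" and q :: nat
  assumes "prob_space M"
    and "X \<in> borel_measurable M"
    and "q \<ge> 1"
    and "AE \<omega> in M. real q * X \<omega> \<in> \<int>"
    and "integrable M X"
  shows "(complex_of_real (\<integral>\<omega>. real_of_int \<lfloor>X \<omega>\<rfloor> \<partial>M)
           = complex_of_real (\<integral>\<omega>. X \<omega> \<partial>M) - 1/2 + 1 / (2 * of_nat q)
             + (\<Sum>j=1..q-1. char (distr M borel X) (2 * pi * real j)
                  / (of_nat q * (1 - exp (- 2 * pi * \<i> * of_nat j / of_nat q)))))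
         \<and> (even q \<longrightarrow> complex_of_real (\<integral>\<omega>. real_of_int (round_nearest (X \<omega>)) \<partial>M)
           = complex_of_real (\<integral>\<omega>. X \<omega> \<partial>M) + 1 / (2 * of_nat q)
             + (\<Sum>j=1..q-1. (-1) ^ j * char (distr M borel X) (2 * pi * real j)
                  / (of_nat q * (1 - exp (- 2 * pi * \<i> * of_nat j / of_nat q)))))
         \<and> (odd q \<longrightarrow> complex_of_real (\<integral>\<omega>. real_of_int (round_nearest (X \<omega>)) \<partial>M)
           = complex_of_real (\<integral>\<omega>. X \<omega> \<partial>M)
             + (\<Sum>j=1..q-1. (-1) ^ j * char (distr M borel X) (2 * pi * real j)
                  / (of_nat q * (exp (pi * \<i> * of_nat j / of_nat q)
                                 - exp (- pi * \<i> * of_nat j / of_nat q)))))"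
  using prob_space.expectation_floor_char[OF assms(1,3,4,5)]
    prob_space.expectation_round_nearest_even_char[OF assms(1,3) _ assms(4,5)]
    prob_space.expectation_round_nearest_odd_char[OF assms(1,3) _ assms(4,5)]
  by blast

end
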